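(* Let $n\ge 1$. Every game of Planted Brussels Sprouts of order $n$ ends after exactly $n-1$ moves, no matter how the moves are chosen.
   Context: Planted Brussels Sprouts of order $n$: start with a closed disk with $n$ marked points on its boundary circle, labeled $1,\dots,n$ in clockwise order. Attached to each marked point is an arm, a short segment pointing into the interior of the disk; these arms are free. A move consists of two steps. First, choose two free arms and join their free ends by a simple curve (an arc) in the disk that does not intersect any previously drawn arc or arm; the two joined arms cease to be free. Second, mark a point (a notch) on the new arc, from which two new free arms emanate, one on each side of the arc. The game ends when no move is possible. *)

theory Defs
  imports Main
begin

text \<open>Everything drawn is connected to the boundary circle, so every region of the
  disk is simply connected and is determined (for the purposes of the game) by
  the cyclic sequence of free arms lying on its boundary.  A position is the
  list of regions; each region is a list of free arms read in cyclic order.\<close>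

type_synonym arm = nat
type_synonym region = "arm list"
type_synonym position = "region list"

definition free_arms :: "position \<Rightarrow> arm set" where
  "free_arms S = \<Union> (set (map set S))"

definition initial :: "nat \<Rightarrow> position" where
  "initial n = [[Suc 0..<Suc n]]"

text \<open>A move: in some region R, rotate its cyclic boundary so that it reads
  a, xs, b, ys; join the free arms a and b by an arc inside R.  The arc splits R
  into the region bounded by a, xs, b and the arc, and the region bounded by
  b, ys, a and the arc.  The notch on the arc contributes one new free arm
  (c, resp. d) to each of the two new regions.\<close>
inductive move :: "position \<Rightarrow> position \<Rightarrow> bool" where
  "\<lbrakk> rotate k R = a # xs @ b # ys;
     c \<notin> free_arms (A @ R # B); d \<notin> free_arms (A @ R # B); c \<noteq> d \<rbrakk>
   \<Longrightarrow> move (A @ R # B) (A @ (xs @ [c]) # (ys @ [d]) # B)"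

definition game_over :: "position \<Rightarrow> bool" where
  "game_over S \<longleftrightarrow> \<not> (\<exists>S'. move S S')"

definition is_play :: "nat \<Rightarrow> position list \<Rightarrow> bool" where
  "is_play n ps \<longleftrightarrow> ps \<noteq> [] \<and> hd ps = initial n \<and>
     (\<forall>i. Suc i < length ps \<longrightarrow> move (ps ! i) (ps ! Suc i))"

end

theory Submission
  imports Defs
begin

text \<open>Every move splits one region into two and keeps the total number of free arms:
  the two joined arms disappear and the notch contributes two new ones.  Regions never
  become empty, since each new region receives a notch arm.  Hence after m moves there
  are m + 1 nonempty regions carrying n arms in total, so m \<le> n - 1.  A region with two
  free arms always admits a move, so at the end every region carries exactly one arm,
  and then m + 1 = n.\<close>

definition arm_count :: "position \<Rightarrow> nat" where
  "arm_count S = sum_list (map length S)"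

lemma move_length: "move S S' \<Longrightarrow> length S' = Suc (length S)"
  by (induction rule: move.induct) simp

lemma move_arm_count:
  assumes "move S S'"
  shows "arm_count S' = arm_count S"
  using assms
proof cases
  case (1 k R a xs b ys c A d B)
  have "length R = length (rotate k R)" by simp
  then have "length R = length xs + length ys + 2" using 1 by simp
  then show ?thesis using 1 by (simp add: arm_count_def)
qed

lemma move_nonempty_regions: "move S S' \<Longrightarrow> [] \<notin> set S \<Longrightarrow> [] \<notin> set S'"
  by (induction rule: move.induct) auto

lemma finite_free_arms: "finite (free_arms S)"
  unfolding free_arms_def by auto

lemma move_if_long_region:
  assumes "R \<in> set S" "2 \<le> length R"
  shows "\<exists>S'. move S S'"
proof -
  obtain A B where S: "S = A @ R # B" using assms(1) by (metis in_set_conv_decomp)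
  obtain a b ys where R: "R = a # b # ys" using assms(2)
    by (cases R; cases "tl R") auto
  obtain c where c: "c \<notin> free_arms S"
    using ex_new_if_finite[OF infinite_UNIV_nat finite_free_arms] by blast
  obtain d where d: "d \<notin> insert c (free_arms S)"
    using ex_new_if_finite[OF infinite_UNIV_nat] finite_free_arms by (metis finite_insert)
  have "rotate 0 R = a # [] @ b # ys" using R by simp
  from move.intros[OF this, of c A B d] c d S show ?thesis by auto
qed

lemma game_over_singleton_regions:
  assumes "game_over S" "[] \<notin> set S" "R \<in> set S"
  shows "length R = 1"
proof -
  have "\<not> 2 \<le> length R"
    using move_if_long_region[OF assms(3)] assms(1) unfolding game_over_def by blast
  moreover have "R \<noteq> []" using assms(2,3) by blast
  ultimately show ?thesis by (cases R) (auto simp: Suc_le_eq)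
qed

lemma length_le_arm_count: "[] \<notin> set S \<Longrightarrow> length S \<le> arm_count S"
proof (induction S)
  case (Cons R S)
  then have "1 \<le> length R" by (cases R) auto
  with Cons show ?case by (simp add: arm_count_def)
qed simp

lemma arm_count_singleton_regions: "\<forall>R\<in>set S. length R = 1 \<Longrightarrow> arm_count S = length S"
  unfolding arm_count_def by (induction S) auto

lemma play_nth_invariant:
  assumes "is_play n ps" "n \<ge> 1" "i < length ps"
  shows "length (ps ! i) = Suc i \<and> arm_count (ps ! i) = n \<and> [] \<notin> set (ps ! i)"
  using assms(3)
proof (induction i)
  case 0
  have "ps ! 0 = initial n" using assms(1) unfolding is_play_def by (metis hd_conv_nth)
  then show ?case using assms(2) by (simp add: initial_def arm_count_def)
next
  case (Suc i)
  then have "move (ps ! i) (ps ! Suc i)" using assms(1) unfolding is_play_def by blast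
  with Suc show ?case
    using move_length move_arm_count move_nonempty_regions by simp
qed

lemma play_last_invariant:
  assumes "is_play n ps" "n \<ge> 1"
  shows "length (last ps) = length ps \<and> arm_count (last ps) = n \<and> [] \<notin> set (last ps)"
proof -
  have "ps \<noteq> []" using assms(1) unfolding is_play_def by simp
  then show ?thesis
    using play_nth_invariant[OF assms, of "length ps - 1"] by (simp add: last_conv_nth)
qed

theorem mainTheorem1:
  fixes n :: nat
  assumes "n \<ge> 1"
  shows "(\<forall>ps. is_play n ps \<longrightarrow> length ps - 1 \<le> n - 1) \<and>
         (\<forall>ps. is_play n ps \<and> game_over (last ps) \<longrightarrow> length ps - 1 = n - 1)"
proof (intro conjI allI impI)
  fix ps assume "is_play n ps"
  from play_last_invariant[OF this assms] length_le_arm_count[of "last ps"]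
  show "length ps - 1 \<le> n - 1" by simp
next
  fix ps assume play: "is_play n ps \<and> game_over (last ps)"
  then have inv: "length (last ps) = length ps \<and> arm_count (last ps) = n \<and> [] \<notin> set (last ps)"
    using play_last_invariant assms by blast
  then have "\<forall>R\<in>set (last ps). length R = 1"
    using game_over_singleton_regions play by blast
  with inv arm_count_singleton_regions show "length ps - 1 = n - 1" by metis
qed

end
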